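(* Let $w \in \mathbb{R}^n$ with $w_j > 0$ for all $j$, and let $x \in \mathbb{R}^n$ with $x_j > 0$ for $2 \le j \le n$. Set $b_j = \frac{w_1}{w_j} x_j$ for $2 \le j\le n$ and $b_1 = x_1^-$, and assume the coordinates $2,\dots,n$ are ordered so that $b_1 \le 0 < b_2 \le b_3 \le \dots \le b_n$. Define $B_1 = \{2,\dots,n\}$, $B_k = \{k+1,\dots,n\}$ for $2 \le k \le n-1$, $B_n = \emptyset$, and intervals $T_1 = [b_1, b_2]$, $T_k = (b_k, b_{k+1}]$ for $2 \le k \le n-1$, $T_n = (b_n, \infty)$. For $1 \le k \le n$ let \[ t_k = w_1 \, \frac{w_1 x_1 + \sum_{j \in B_k} w_j x_j}{w_1^2 + \sum_{j \in B_k} w_j^2}. \] Let $t^* = \arg\min_{t \in [b_1,\infty)} \|x - \phi_t(x)\|$. If $t_k \in T_k$ for some $k$, then $t^* = t_k$, and the set of indices $j\in\{2,\dots,n\}$ with $b_j \ge t^*$ equals $B_k$.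
   Context: $\|\cdot\|$ is the Euclidean norm on $\mathbb{R}^n$. For $t \in \mathbb{R}$, $\phi_t : \mathbb{R}^n \to \mathbb{R}^n$ is defined by $\phi_t(x)_1 = t$, and for $j \ne 1$: $\phi_t(x)_j = \frac{w_j}{w_1} t$ if $\frac{w_1}{w_j} x_j \ge t$, and $\phi_t(x)_j = x_j$ otherwise. $x_1^- := \min\{0, x_1\}$. *)

theory Defs
  imports Main "HOL-Library.Extended_Real" Complex_Main
begin

text \<open>Vectors in R^n are represented as functions nat => real, indices 1..n.\<close>

definition phi :: "(nat \<Rightarrow> real) \<Rightarrow> real \<Rightarrow> (nat \<Rightarrow> real) \<Rightarrow> (nat \<Rightarrow> real)" where
  "phi w t x = (\<lambda>j. if j = 1 then t
                     else if w 1 / w j * x j \<ge> t then w j / w 1 * t else x j)"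

definition enorm :: "nat \<Rightarrow> (nat \<Rightarrow> real) \<Rightarrow> real" where
  "enorm n v = sqrt (\<Sum>j=1..n. (v j)\<^sup>2)"

definition negpart :: "real \<Rightarrow> real" where
  "negpart a = min 0 a"

definition bvec :: "(nat \<Rightarrow> real) \<Rightarrow> (nat \<Rightarrow> real) \<Rightarrow> nat \<Rightarrow> real" where
  "bvec w x j = (if j = 1 then negpart (x 1) else w 1 / w j * x j)"

definition Bset :: "nat \<Rightarrow> nat \<Rightarrow> nat set" where
  "Bset n k = (if k = 1 then {2..n} else if k \<le> n - 1 then {k+1..n} else {})"

definition Tset :: "nat \<Rightarrow> (nat \<Rightarrow> real) \<Rightarrow> nat \<Rightarrow> real set" where
  "Tset n b k = (if k = 1 then {b 1 .. b 2}
                 else if k \<le> n - 1 then {b k <.. b (k+1)}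
                 else {b n <..})"

definition tval :: "nat \<Rightarrow> (nat \<Rightarrow> real) \<Rightarrow> (nat \<Rightarrow> real) \<Rightarrow> nat \<Rightarrow> real" where
  "tval n w x k = w 1 * ((w 1 * x 1 + (\<Sum>j\<in>Bset n k. w j * x j))
                       / ((w 1)\<^sup>2 + (\<Sum>j\<in>Bset n k. (w j)\<^sup>2)))"

end

theory Submission
  imports Defs
begin

text \<open>Writing \<open>a\<^sub>j = w\<^sub>j / w\<^sub>1\<close>, the residual satisfies \<open>x\<^sub>j - \<phi>\<^sub>t(x)\<^sub>j = a\<^sub>j (b\<^sub>j - t)\<^sup>+\<close> for \<open>j \<ge> 2\<close>,
  so the squared objective is \<open>F(t) = (x\<^sub>1 - t)\<^sup>2 + \<Sum>\<^sub>j a\<^sub>j\<^sup>2 ((b\<^sub>j - t)\<^sup>+)\<^sup>2\<close>. This is a strongly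
  convex function of \<open>t\<close>, and at a stationary point \<open>t\<close> one has \<open>F(s) \<ge> F(t) + (s - t)\<^sup>2\<close>,
  whence \<open>t\<close> is the unique minimiser. If \<open>t\<^sub>k \<in> T\<^sub>k\<close>, the ordering of the \<open>b\<^sub>j\<close> makes \<open>B\<^sub>k\<close>
  the set of indices where \<open>(b\<^sub>j - t\<^sub>k)\<^sup>+\<close> is active, and the formula for \<open>t\<^sub>k\<close> is exactly the
  stationarity equation \<open>\<Sum>\<^bsub>j \<in> B\<^sub>k\<^esub> a\<^sub>j\<^sup>2 (b\<^sub>j - t) = t - x\<^sub>1\<close>.\<close>

definition hinge_energy :: "real \<Rightarrow> ('a \<Rightarrow> real) \<Rightarrow> ('a \<Rightarrow> real) \<Rightarrow> 'a set \<Rightarrow> real \<Rightarrow> real" where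
  "hinge_energy y c b J s = (y - s)\<^sup>2 + (\<Sum>j\<in>J. c j * (max 0 (b j - s))\<^sup>2)"

lemma sq_pos_part_tangent:
  fixes u v :: real
  shows "(max 0 u)\<^sup>2 + 2 * max 0 u * (v - u) \<le> (max 0 v)\<^sup>2"
proof (cases "u \<le> 0")
  case False
  have "u\<^sup>2 + 2 * u * (v - u) = v\<^sup>2 - (v - u)\<^sup>2"
    by (simp add: power2_eq_square algebra_simps)
  then have "u\<^sup>2 + 2 * u * (v - u) \<le> v\<^sup>2"
    using zero_le_power2[of "v - u"] by linarith
  moreover have "u * v \<le> 0" if "v < 0"
    using False that by (simp add: mult_nonneg_nonpos)
  ultimately show ?thesis
    using False by (cases "v \<ge> 0") (auto simp: power2_eq_square algebra_simps)
qed simp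

lemma hinge_energy_quadratic_growth:
  assumes c: "\<And>j. j \<in> J \<Longrightarrow> c j \<ge> 0"
    and stationary: "(\<Sum>j\<in>J. c j * max 0 (b j - t)) = t - y"
  shows "hinge_energy y c b J t + (s - t)\<^sup>2 \<le> hinge_energy y c b J s"
proof -
  have "(\<Sum>j\<in>J. c j * (max 0 (b j - t))\<^sup>2) + 2 * (t - s) * (\<Sum>j\<in>J. c j * max 0 (b j - t))
      = (\<Sum>j\<in>J. c j * (max 0 (b j - t))\<^sup>2 + 2 * (t - s) * (c j * max 0 (b j - t)))"
    by (simp add: sum.distrib sum_distrib_left)
  also have "\<dots> = (\<Sum>j\<in>J. c j * ((max 0 (b j - t))\<^sup>2 + 2 * max 0 (b j - t) * ((b j - s) - (b j - t))))"
    by (rule sum.cong) (simp_all add: algebra_simps)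
  also have "\<dots> \<le> (\<Sum>j\<in>J. c j * (max 0 (b j - s))\<^sup>2)"
    by (intro sum_mono mult_left_mono sq_pos_part_tangent c)
  finally have "(\<Sum>j\<in>J. c j * (max 0 (b j - t))\<^sup>2) + 2 * (t - s) * (t - y)
      \<le> (\<Sum>j\<in>J. c j * (max 0 (b j - s))\<^sup>2)"
    by (simp add: stationary)
  moreover have "(y - s)\<^sup>2 + 2 * (t - s) * (t - y) = (y - t)\<^sup>2 + (s - t)\<^sup>2"
    by (simp add: power2_eq_square algebra_simps)
  ultimately show ?thesis
    unfolding hinge_energy_def by linarith
qed

lemma unique_is_arg_min_of_strict_min:
  fixes f :: "'a \<Rightarrow> 'b::linorder"
  assumes "P t" and strict: "\<And>s. s \<noteq> t \<Longrightarrow> f t < f s"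
  shows "is_arg_min f P t \<and> (\<forall>s. is_arg_min f P s \<longrightarrow> s = t)"
  using assms unfolding is_arg_min_def by (metis less_asym)

lemma sum_pos_part_active:
  fixes b c :: "'a \<Rightarrow> real"
  assumes "finite J"
  shows "(\<Sum>j\<in>J. c j * max 0 (b j - t)) = (\<Sum>j\<in>{j\<in>J. t \<le> b j}. c j * (b j - t))"
proof -
  have "(\<Sum>j\<in>J. c j * max 0 (b j - t)) = (\<Sum>j\<in>{j\<in>J. t \<le> b j}. c j * max 0 (b j - t))"
    using assms by (intro sum.mono_neutral_right) (auto simp: max_def)
  also have "\<dots> = (\<Sum>j\<in>{j\<in>J. t \<le> b j}. c j * (b j - t))"
    by (rule sum.cong) (auto simp: max_def)
  finally show ?thesis .
qed

lemma enorm_residual_phi: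
  assumes "n \<ge> 1" and wpos: "\<forall>j\<in>{1..n}. w j > 0"
  shows "enorm n (\<lambda>j. x j - phi w s x j)
       = sqrt (hinge_energy (x 1) (\<lambda>j. (w j / w 1)\<^sup>2) (bvec w x) {2..n} s)"
proof -
  have "(x j - phi w s x j)\<^sup>2 = (w j / w 1)\<^sup>2 * (max 0 (bvec w x j - s))\<^sup>2"
    if j: "j \<in> {2..n}" for j
  proof -
    have "w j > 0" "w 1 > 0"
      using j wpos by auto
    then have "x j - w j / w 1 * s = w j / w 1 * (bvec w x j - s)"
      using j by (simp add: bvec_def field_simps)
    then have "(x j - w j / w 1 * s)\<^sup>2 = (w j / w 1)\<^sup>2 * (bvec w x j - s)\<^sup>2"
      by (simp only: power_mult_distrib)
    with j show ?thesis
      by (auto simp: phi_def bvec_def max_def)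
  qed
  moreover have "{1..n} = insert 1 {2..n}"
    using assms(1) by auto
  ultimately show ?thesis
    by (simp add: enorm_def hinge_energy_def phi_def)
qed

lemma active_set_eq_Bset:
  fixes b :: "nat \<Rightarrow> real"
  assumes sorted: "\<And>i j. 2 \<le> i \<Longrightarrow> i \<le> j \<Longrightarrow> j \<le> n \<Longrightarrow> b i \<le> b j"
    and k: "k \<in> {1..n}" and t: "t \<in> Tset n b k"
  shows "{j\<in>{2..n}. t \<le> b j} = Bset n k"
proof (cases "k = 1")
  case True
  then show ?thesis
    using t sorted[of 2] by (force simp: Tset_def Bset_def)
next
  case k1: False
  show ?thesis
  proof (cases "k \<le> n - 1")
    case True
    with k1 t have "b k < t" "t \<le> b (k + 1)"
      by (auto simp: Tset_def)
    then show ?thesis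
      using k k1 True sorted[of _ k] sorted[of "k + 1"]
      by (force simp: Bset_def not_less_eq_eq)
  next
    case False
    with k1 t have "b n < t"
      by (auto simp: Tset_def)
    then show ?thesis
      using k1 False sorted[of _ n] by (force simp: Bset_def)
  qed
qed

lemma Tset_lower_bound:
  fixes b :: "nat \<Rightarrow> real"
  assumes sorted: "\<And>i j. 2 \<le> i \<Longrightarrow> i \<le> j \<Longrightarrow> j \<le> n \<Longrightarrow> b i \<le> b j"
    and "b 1 \<le> b 2" and k: "k \<in> {1..n}" and t: "t \<in> Tset n b k"
  shows "b 1 \<le> t"
proof (cases "k = 1")
  case False
  have "b k < t"
  proof (cases "k \<le> n - 1")
    case True
    with False t show ?thesis by (simp add: Tset_def)
  next
    case not_le: False
    with k have "k = n" by auto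
    with False not_le t show ?thesis by (simp add: Tset_def)
  qed
  moreover have "b 2 \<le> b k"
    using False k sorted[of 2 k] by auto
  ultimately show ?thesis
    using \<open>b 1 \<le> b 2\<close> by linarith
qed (use t in \<open>simp add: Tset_def\<close>)

lemma tval_stationary:
  assumes "n \<ge> 1" and wpos: "\<forall>j\<in>{1..n}. w j > 0"
    and active: "{j\<in>{2..n}. tval n w x k \<le> bvec w x j} = Bset n k"
  defines "t \<equiv> tval n w x k"
  shows "(\<Sum>j\<in>{2..n}. (w j / w 1)\<^sup>2 * max 0 (bvec w x j - t)) = t - x 1"
proof -
  let ?B = "Bset n k"
  have B: "?B \<subseteq> {2..n}"
    using active by blast
  then have w: "w 1 > 0" "\<And>j. j \<in> ?B \<Longrightarrow> w j > 0"
    using wpos \<open>n \<ge> 1\<close> by auto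
  have "(\<Sum>j\<in>{2..n}. (w j / w 1)\<^sup>2 * max 0 (bvec w x j - t))
      = (\<Sum>j\<in>?B. (w j / w 1)\<^sup>2 * (bvec w x j - t))"
    unfolding sum_pos_part_active[OF finite_atLeastAtMost] active[folded t_def] ..
  also have "\<dots> = (\<Sum>j\<in>?B. w j * x j) / w 1 - t * (\<Sum>j\<in>?B. (w j)\<^sup>2) / (w 1)\<^sup>2"
  proof -
    have "(w j / w 1)\<^sup>2 * (bvec w x j - t) = w j * x j / w 1 - t * (w j)\<^sup>2 / (w 1)\<^sup>2"
      if "j \<in> ?B" for j
      using that B w by (auto simp: bvec_def field_simps power2_eq_square)
    then show ?thesis
      by (simp add: sum_subtractf sum_divide_distrib sum_distrib_left)
  qed
  also have "\<dots> = t - x 1"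
  proof -
    have "(w 1)\<^sup>2 + (\<Sum>j\<in>?B. (w j)\<^sup>2) > 0"
      using w(1) by (simp add: add_pos_nonneg sum_nonneg)
    then have "t * ((w 1)\<^sup>2 + (\<Sum>j\<in>?B. (w j)\<^sup>2)) = w 1 * (w 1 * x 1 + (\<Sum>j\<in>?B. w j * x j))"
      by (simp add: t_def tval_def)
    then show ?thesis
      using w(1) by (simp add: field_simps power2_eq_square)
  qed
  finally show ?thesis .
qed

theorem mainTheorem5:
  fixes n :: nat and w x :: "nat \<Rightarrow> real" and k :: nat
  assumes n2: "n \<ge> 2"
    and wpos: "\<forall>j\<in>{1..n}. w j > 0"
    and xpos: "\<forall>j\<in>{2..n}. x j > 0"
    and b1: "bvec w x 1 \<le> 0" and b2: "0 < bvec w x 2"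
    and sorted: "\<forall>i j. 2 \<le> i \<longrightarrow> i \<le> j \<longrightarrow> j \<le> n \<longrightarrow> bvec w x i \<le> bvec w x j"
    and k: "k \<in> {1..n}"
    and tk: "tval n w x k \<in> Tset n (bvec w x) k"
  shows "is_arg_min (\<lambda>t. enorm n (\<lambda>j. x j - phi w t x j)) (\<lambda>t. t \<ge> bvec w x 1) (tval n w x k)
       \<and> (\<forall>s. is_arg_min (\<lambda>t. enorm n (\<lambda>j. x j - phi w t x j)) (\<lambda>t. t \<ge> bvec w x 1) s
              \<longrightarrow> s = tval n w x k)
       \<and> {j\<in>{2..n}. bvec w x j \<ge> tval n w x k} = Bset n k"
proof -
  let ?t = "tval n w x k"
  let ?F = "hinge_energy (x 1) (\<lambda>j. (w j / w 1)\<^sup>2) (bvec w x) {2..n}"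
  have active: "{j\<in>{2..n}. ?t \<le> bvec w x j} = Bset n k"
    using sorted by (intro active_set_eq_Bset[OF _ k tk]) blast
  have feasible: "bvec w x 1 \<le> ?t"
    using sorted b1 b2 by (intro Tset_lower_bound[OF _ _ k tk]) auto
  have stationary: "(\<Sum>j\<in>{2..n}. (w j / w 1)\<^sup>2 * max 0 (bvec w x j - ?t)) = ?t - x 1"
    using n2 wpos active by (intro tval_stationary) auto
  have growth: "?F ?t + (s - ?t)\<^sup>2 \<le> ?F s" for s
    by (rule hinge_energy_quadratic_growth[OF _ stationary]) simp
  have residual: "enorm n (\<lambda>j. x j - phi w s x j) = sqrt (?F s)" for s
    using n2 wpos by (intro enorm_residual_phi) auto
  have "enorm n (\<lambda>j. x j - phi w ?t x j) < enorm n (\<lambda>j. x j - phi w s x j)"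
    if "s \<noteq> ?t" for s
  proof -
    have "(s - ?t)\<^sup>2 > 0"
      using that by simp
    with growth[of s] have "?F ?t < ?F s"
      by linarith
    then show ?thesis
      unfolding residual by simp
  qed
  from unique_is_arg_min_of_strict_min[where P = "\<lambda>t. t \<ge> bvec w x 1" and t = ?t
      and f = "\<lambda>t. enorm n (\<lambda>j. x j - phi w t x j)", OF feasible this] active
  show ?thesis
    by simp
qed

end
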